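(* Let $\pi$ be a probability density on $\mathbb{R}^d$, $\sigma>0$, $K\ge1$, $\alpha_1,\dots,\alpha_K\in(0,1)$, and $f_\theta:\{1,\dots,K\}\times\mathbb{R}^d\to\mathbb{R}^d$. Set $\lambda_k:=1-\sqrt{1-\alpha_k}$. Let $p^{\mathrm{ref}}(y_{0:K})$ be the law of the Markov chain $y_0\sim\mathcal{N}(0,\sigma^2I)$, $y_{k+1}=\sqrt{1-\alpha_{K-k}}\,y_k+\sigma\sqrt{\alpha_{K-k}}\,\varepsilon_k$, and $q^\theta(y_{0:K})$ the law of the Markov chain $y_0\sim\mathcal{N}(0,\sigma^2I)$, $$y_{k+1}=\sqrt{1-\alpha_{K-k}}\,y_k+2\sigma^2\lambda_{K-k}\,f_\theta(K-k,y_k)+\sigma\sqrt{\alpha_{K-k}}\,\varepsilon_k,$$ for $k=0,\dots,K-1$, where $\varepsilon_k\stackrel{\text{i.i.d.}}{\sim}\mathcal{N}(0,I)$. For $k=1,\dots,K$ define $\epsilon_k:=\frac{1}{\sigma\sqrt{\alpha_k}}\big(y_{K-k+1}-\sqrt{1-\alpha_k}\,y_{K-k}-2\sigma^2\lambda_kf_\theta(k,y_{K-k})\big)$. Then for $y_{0:K}\sim q^\theta$, the $\epsilon_k$ are i.i.d. $\mathcal{N}(0,I)$ and $$\log\Big(\frac{q^\theta(y_{0:K})}{p^{\mathrm{ref}}(y_{0:K})}\Big)=2\sigma^2\sum_{k=1}^K\frac{\lambda_k^2}{\alpha_k}\|f_\theta(k,y_{K-k})\|^2+2\sigma\sum_{k=1}^K\frac{\lambda_k}{\sqrt{\alpha_k}}f_\theta(k,y_{K-k})^\top\epsilon_k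 .$$ Moreover, letting $p(y_{0:K}):=p^{\mathrm{ref}}(y_{0:K})\,\pi(y_K)/\mathcal{N}(y_K;0,\sigma^2I)$, one has $\mathrm{KL}(q^\theta\|p)=\mathrm{KL}(q^\theta\|p^{\mathrm{ref}})+\mathbb{E}_{q^\theta}\big[\log\big(\mathcal{N}(y_K;0,\sigma^2I)/\pi(y_K)\big)\big]$ and $$\mathrm{KL}(q^\theta\|p)=\mathbb{E}_{q^\theta}\Big[2\sigma^2\sum_{k=1}^K\frac{\lambda_k^2}{\alpha_k}\|f_\theta(k,y_{K-k})\|^2+\ln\Big(\frac{\mathcal{N}(y_K;0,\sigma^2I)}{\pi(y_K)}\Big)\Big].$$
   Context: $\mathcal{N}(y;0,\sigma^2I)$ denotes the Gaussian density with mean $0$ and covariance $\sigma^2I$ at $y$. The chain $p^{\mathrm{ref}}$ is the exact discretisation of the time reversal of the stationary Ornstein--Uhlenbeck process $\mathrm{d}x_t=-\beta_tx_t\mathrm{d}t+\sigma\sqrt{2\beta_t}\mathrm{d}B_t$ with $\alpha_k=1-\exp(-2\int_{(k-1)\delta}^{k\delta}\beta_s\mathrm{d}s)$; its marginals all equal $\mathcal{N}(0,\sigma^2I)$. The density $p$ is the time reversal of the discrete forward noising process $\pi(x_0)\prod_{k=1}^K\mathcal{N}(x_k;\sqrt{1-\alpha_k}x_{k-1},\sigma^2\alpha_kI)$ with $y_k=x_{K-k}$. *)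

theory Defs
  imports "HOL-Probability.Probability"
begin

definition gauss_dens :: "real \<Rightarrow> 'a::euclidean_space \<Rightarrow> 'a \<Rightarrow> real" where
  "gauss_dens v m x = (2 * pi * v) powr (- real DIM('a) / 2) * exp (- (norm (x - m))\<^sup>2 / (2 * v))"

definition std_gauss :: "'a::euclidean_space measure" where
  "std_gauss = density lborel (\<lambda>x. ennreal (gauss_dens 1 0 x))"

definition traj_space :: "nat \<Rightarrow> (nat \<Rightarrow> 'a::euclidean_space) measure" where
  "traj_space K = PiM {0..K} (\<lambda>_. lborel)"

definition lam :: "(nat \<Rightarrow> real) \<Rightarrow> nat \<Rightarrow> real" where
  "lam \<alpha> k = 1 - sqrt (1 - \<alpha> k)"

definition pref_dens :: "real \<Rightarrow> nat \<Rightarrow> (nat \<Rightarrow> real) \<Rightarrow> (nat \<Rightarrow> 'a::euclidean_space) \<Rightarrow> real" where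
  "pref_dens \<sigma> K \<alpha> y =
     gauss_dens (\<sigma>\<^sup>2) 0 (y 0) *
     (\<Prod>k<K. gauss_dens (\<sigma>\<^sup>2 * \<alpha> (K - k)) (sqrt (1 - \<alpha> (K - k)) *\<^sub>R y k) (y (Suc k)))"

definition q_dens :: "real \<Rightarrow> nat \<Rightarrow> (nat \<Rightarrow> real) \<Rightarrow> (nat \<Rightarrow> 'a \<Rightarrow> 'a) \<Rightarrow> (nat \<Rightarrow> 'a::euclidean_space) \<Rightarrow> real" where
  "q_dens \<sigma> K \<alpha> f y =
     gauss_dens (\<sigma>\<^sup>2) 0 (y 0) *
     (\<Prod>k<K. gauss_dens (\<sigma>\<^sup>2 * \<alpha> (K - k))
        (sqrt (1 - \<alpha> (K - k)) *\<^sub>R y k + (2 * \<sigma>\<^sup>2 * lam \<alpha> (K - k)) *\<^sub>R f (K - k) (y k)) (y (Suc k)))"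

definition p_dens :: "real \<Rightarrow> nat \<Rightarrow> (nat \<Rightarrow> real) \<Rightarrow> ('a \<Rightarrow> real) \<Rightarrow> (nat \<Rightarrow> 'a::euclidean_space) \<Rightarrow> real" where
  "p_dens \<sigma> K \<alpha> \<pi> y = pref_dens \<sigma> K \<alpha> y * \<pi> (y K) / gauss_dens (\<sigma>\<^sup>2) 0 (y K)"

definition q_meas :: "real \<Rightarrow> nat \<Rightarrow> (nat \<Rightarrow> real) \<Rightarrow> (nat \<Rightarrow> 'a \<Rightarrow> 'a) \<Rightarrow> (nat \<Rightarrow> 'a::euclidean_space) measure" where
  "q_meas \<sigma> K \<alpha> f = density (traj_space K) (\<lambda>y. ennreal (q_dens \<sigma> K \<alpha> f y))"

definition eps_noise :: "real \<Rightarrow> nat \<Rightarrow> (nat \<Rightarrow> real) \<Rightarrow> (nat \<Rightarrow> 'a \<Rightarrow> 'a) \<Rightarrow> nat \<Rightarrow> (nat \<Rightarrow> 'a::euclidean_space) \<Rightarrow> 'a" where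
  "eps_noise \<sigma> K \<alpha> f k y = (1 / (\<sigma> * sqrt (\<alpha> k))) *\<^sub>R
     (y (K - k + 1) - sqrt (1 - \<alpha> k) *\<^sub>R y (K - k) - (2 * \<sigma>\<^sup>2 * lam \<alpha> k) *\<^sub>R f k (y (K - k)))"

definition KL_dens :: "'b measure \<Rightarrow> ('b \<Rightarrow> real) \<Rightarrow> ('b \<Rightarrow> real) \<Rightarrow> real" where
  "KL_dens M q p = (\<integral>y. ln (q y / p y) \<partial>(density M (\<lambda>y. ennreal (q y))))"

end

theory Submission
  imports Defs
begin

text \<open>Both chains use Gaussian transitions of the same variance \<open>\<sigma>\<^sup>2\<alpha>\<^sub>k\<close>, whose means differ
  by the drift \<open>2\<sigma>\<^sup>2\<lambda>\<^sub>k f(k, y)\<close>; so \<open>log(q\<^sup>\<theta>/p\<^sup>r\<^sup>e\<^sup>f)\<close> is a sum of log-ratios of two such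
  Gaussians, and expanding the squares gives the quadratic drift term plus a term linear in
  the reconstructed noise \<open>\<epsilon>\<^sub>k\<close>. Under \<open>q\<^sup>\<theta>\<close>, \<open>\<epsilon>\<^sub>k\<close> is exactly the standardised innovation
  of step \<open>K - k\<close>; integrating out the coordinates one at a time, each by a change of variables
  in its Gaussian kernel, shows that the \<open>\<epsilon>\<^sub>k\<close> are i.i.d. \<open>N(0, I)\<close> and that \<open>\<epsilon>\<^sub>k\<close> is
  independent of \<open>y\<^sub>K\<^sub>-\<^sub>k\<close>. By the symmetry \<open>\<epsilon> \<mapsto> -\<epsilon>\<close> the linear terms have mean zero. Finally
  \<open>p\<close> differs from \<open>p\<^sup>r\<^sup>e\<^sup>f\<close> only by the factor \<open>\<pi>(y\<^sub>K) / N(y\<^sub>K; 0, \<sigma>\<^sup>2I)\<close>, which adds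
  \<open>E[ln(N(y\<^sub>K; 0, \<sigma>\<^sup>2I) / \<pi>(y\<^sub>K))]\<close> to the divergence.\<close>

section \<open>Gaussian densities\<close>

lemma gauss_dens_pos: "0 < v \<Longrightarrow> 0 < gauss_dens v m x"
  unfolding gauss_dens_def by simp

lemma gauss_dens_nonneg: "0 \<le> gauss_dens v m x"
  unfolding gauss_dens_def by simp

lemma measurable_gauss_dens [measurable (raw)]:
  assumes [measurable]: "g \<in> borel_measurable M" "h \<in> borel_measurable M"
  shows "(\<lambda>y. gauss_dens v (g y) (h y)) \<in> borel_measurable M"
  unfolding gauss_dens_def by measurable

lemma gauss_dens_1_eq_prod_normal_density:
  "gauss_dens 1 0 (x::'a::euclidean_space) = (\<Prod>b\<in>Basis. normal_density 0 1 (x \<bullet> b))"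
proof -
  have "(\<Prod>b\<in>Basis. normal_density 0 1 (x \<bullet> b)) =
      (\<Prod>b\<in>(Basis::'a set). 1 / sqrt (2*pi) * exp (- (x \<bullet> b)\<^sup>2 / 2))"
    by (intro prod.cong) (simp_all add: normal_density_def)
  also have "\<dots> = (1 / sqrt (2*pi)) ^ DIM('a) * exp (\<Sum>b\<in>(Basis::'a set). - (x \<bullet> b)\<^sup>2 / 2)"
    by (simp only: prod.distrib exp_sum[OF finite_Basis] prod_constant)
  also have "(\<Sum>b\<in>(Basis::'a set). - (x \<bullet> b)\<^sup>2 / 2) = - (norm x)\<^sup>2 / 2"
  proof -
    have "(norm x)\<^sup>2 = (\<Sum>b\<in>(Basis::'a set). (x \<bullet> b)\<^sup>2)"
      unfolding power2_norm_eq_inner euclidean_inner[of x x] by (simp add: power2_eq_square)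
    then show ?thesis by (simp add: sum_divide_distrib[symmetric] sum_negf)
  qed
  also have "(1 / sqrt (2*pi)) ^ DIM('a) = (2*pi) powr (- real DIM('a) / 2)"
  proof -
    have "1 / sqrt (2*pi) = (2*pi) powr (-1/2)"
      by (simp add: powr_minus_divide powr_half_sqrt[symmetric] powr_minus)
    then show ?thesis by (simp add: powr_realpow[symmetric] powr_powr)
  qed
  finally show ?thesis unfolding gauss_dens_def by simp
qed

lemma nn_integral_gauss_dens_1: "(\<integral>\<^sup>+ x. gauss_dens 1 0 (x::'a::euclidean_space) \<partial>lborel) = 1"
proof -
  have "(\<integral>\<^sup>+ x. gauss_dens 1 0 (x::'a) \<partial>lborel)
     = (\<integral>\<^sup>+ x. (\<Prod>b\<in>Basis. ennreal (normal_density 0 1 ((x::'a) \<bullet> b))) \<partial>lborel)"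
    by (simp add: gauss_dens_1_eq_prod_normal_density prod_ennreal normal_density_nonneg)
  also have "\<dots> = (\<Prod>b\<in>(Basis::'a set). (\<integral>\<^sup>+x. normal_density 0 1 x \<partial>lborel))"
    by (rule nn_integral_lborel_prod) auto
  also have "(\<integral>\<^sup>+x. normal_density 0 1 x \<partial>lborel) = 1"
    by (subst nn_integral_eq_integral) auto
  finally show ?thesis by simp
qed

lemma gauss_dens_affine:
  assumes "s \<noteq> 0"
  shows "\<bar>s\<bar> ^ DIM('a) * gauss_dens (s\<^sup>2) m (m + s *\<^sub>R x) = gauss_dens 1 0 (x::'a::euclidean_space)"
proof -
  have "(s\<^sup>2) powr (- real DIM('a) / 2) = \<bar>s\<bar> powr (- real DIM('a))"
    using powr_powr[of "\<bar>s\<bar>" 2 "- real DIM('a) / 2"] by (simp add: powr_realpow)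
  then have "(2 * pi * s\<^sup>2) powr (- real DIM('a) / 2) = (2 * pi) powr (- real DIM('a) / 2) / \<bar>s\<bar> ^ DIM('a)"
    using assms by (simp add: powr_mult powr_minus_divide powr_realpow)
  moreover have "(norm (m + s *\<^sub>R x - m))\<^sup>2 = s\<^sup>2 * (norm x)\<^sup>2"
    by (simp add: power_mult_distrib)
  ultimately show ?thesis
    using assms unfolding gauss_dens_def by (simp add: field_simps)
qed

lemma sets_std_gauss [measurable_cong, simp]: "sets std_gauss = sets borel"
  unfolding std_gauss_def by simp

lemma nn_integral_std_gauss:
  "G \<in> borel_measurable borel \<Longrightarrow>
    (\<integral>\<^sup>+ e. G e \<partial>std_gauss) = (\<integral>\<^sup>+ e. G e * gauss_dens 1 0 e \<partial>lborel)"
  unfolding std_gauss_def by (subst nn_integral_density) (auto simp: mult.commute)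

lemma prob_space_std_gauss: "prob_space (std_gauss :: 'a::euclidean_space measure)"
proof
  have "emeasure (std_gauss::'a measure) (space std_gauss) = (\<integral>\<^sup>+ e. 1 \<partial>(std_gauss::'a measure))"
    by simp
  also have "\<dots> = 1"
    by (subst nn_integral_std_gauss) (auto simp: nn_integral_gauss_dens_1)
  finally show "emeasure (std_gauss::'a measure) (space std_gauss) = 1" .
qed

lemma nn_integral_gauss_dens_standardise:
  fixes G :: "'a::euclidean_space \<Rightarrow> ennreal"
  assumes s: "s \<noteq> 0" and [measurable]: "G \<in> borel_measurable borel"
  shows "(\<integral>\<^sup>+ z. G ((1/s) *\<^sub>R (z - m)) * gauss_dens (s\<^sup>2) m z \<partial>lborel) = (\<integral>\<^sup>+ e. G e \<partial>std_gauss)"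
proof -
  let ?h = "\<lambda>z. G ((1/s) *\<^sub>R (z - m)) * ennreal (gauss_dens (s\<^sup>2) m z)"
  have "(\<integral>\<^sup>+ z. ?h z \<partial>lborel)
      = (\<integral>\<^sup>+ z. ?h z \<partial>density (distr lborel borel (\<lambda>x. m + s *\<^sub>R x)) (\<lambda>_. \<bar>s\<bar>^DIM('a)))"
    by (subst lborel_affine[OF s, of m]) (rule refl)
  also have "\<dots> = (\<integral>\<^sup>+ x. ennreal (\<bar>s\<bar>^DIM('a)) * ?h (m + s *\<^sub>R x) \<partial>lborel)"
    by (subst nn_integral_density) (auto simp: nn_integral_distr)
  also have "\<dots> = (\<integral>\<^sup>+ e. G e * gauss_dens 1 0 e \<partial>lborel)"
  proof (intro nn_integral_cong)
    fix x :: 'a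
    have "ennreal (\<bar>s\<bar>^DIM('a)) * ennreal (gauss_dens (s\<^sup>2) m (m + s *\<^sub>R x)) = gauss_dens 1 0 x"
      by (simp add: ennreal_mult[symmetric] gauss_dens_nonneg gauss_dens_affine[OF s])
    then show "ennreal (\<bar>s\<bar>^DIM('a)) * ?h (m + s *\<^sub>R x) = G x * gauss_dens 1 0 x"
      using s by (simp add: mult_ac)
  qed
  also have "\<dots> = (\<integral>\<^sup>+ e. G e \<partial>std_gauss)"
    by (simp add: nn_integral_std_gauss)
  finally show ?thesis .
qed

lemma nn_integral_gauss_dens:
  assumes "0 < v"
  shows "(\<integral>\<^sup>+ z. gauss_dens v m (z::'a::euclidean_space) \<partial>lborel) = 1"
proof -
  have "(\<integral>\<^sup>+ z. gauss_dens v m (z::'a) \<partial>lborel)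
      = (\<integral>\<^sup>+ z. (\<lambda>_. 1::ennreal) ((1/sqrt v) *\<^sub>R (z - m)) * ennreal (gauss_dens ((sqrt v)\<^sup>2) m z) \<partial>lborel)"
    using assms by simp
  also have "\<dots> = (\<integral>\<^sup>+ e. 1 \<partial>(std_gauss::'a measure))"
    by (rule nn_integral_gauss_dens_standardise) (use assms in auto)
  finally show ?thesis
    using prob_space.emeasure_space_1[OF prob_space_std_gauss] by simp
qed

lemma nn_integral_std_gauss_uminus:
  fixes G :: "'a::euclidean_space \<Rightarrow> ennreal"
  assumes [measurable]: "G \<in> borel_measurable borel"
  shows "(\<integral>\<^sup>+ e. G (- e) \<partial>std_gauss) = (\<integral>\<^sup>+ e. G e \<partial>std_gauss)"
  using nn_integral_gauss_dens_standardise[of "-1" G 0] by (simp add: nn_integral_std_gauss)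

lemma std_gauss_second_moment_finite:
  "(\<integral>\<^sup>+ e. (norm (e::'a::euclidean_space))\<^sup>2 \<partial>std_gauss) < \<infinity>"
proof -
  define C where "C = 4 * (2*pi) powr (- real DIM('a) / 2) / (4*pi) powr (- real DIM('a) / 2)"
  \<comment> \<open>\<open>t \<le> 4 exp (t / 4)\<close> trades the weight \<open>\<parallel>e\<parallel>\<^sup>2\<close> for a Gaussian of twice the variance\<close>
  have bound: "(norm e)\<^sup>2 * gauss_dens 1 0 e \<le> C * gauss_dens 2 0 e" for e :: 'a
  proof -
    have "(norm e)\<^sup>2 \<le> 4 * exp ((norm e)\<^sup>2 / 4)"
      using exp_ge_add_one_self[of "(norm e)\<^sup>2 / 4"] by linarith
    then have "(norm e)\<^sup>2 * exp (- (norm e)\<^sup>2 / 2) \<le> 4 * exp ((norm e)\<^sup>2 / 4) * exp (- (norm e)\<^sup>2 / 2)"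
      by (intro mult_right_mono) auto
    also have "\<dots> = 4 * exp (- (norm e)\<^sup>2 / 4)"
      by (simp add: exp_add[symmetric])
    finally show ?thesis
      by (simp add: C_def gauss_dens_def)
  qed
  have C0: "0 \<le> C" by (simp add: C_def)
  have "(\<integral>\<^sup>+ e. (norm (e::'a))\<^sup>2 \<partial>std_gauss) = (\<integral>\<^sup>+ e. (norm e)\<^sup>2 * gauss_dens 1 0 (e::'a) \<partial>lborel)"
    by (subst nn_integral_std_gauss) (auto simp: ennreal_mult gauss_dens_nonneg)
  also have "\<dots> \<le> (\<integral>\<^sup>+ e. ennreal C * gauss_dens 2 0 (e::'a) \<partial>lborel)"
    using bound by (intro nn_integral_mono) (simp add: ennreal_mult[symmetric] C0 gauss_dens_nonneg)
  also have "\<dots> = C"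
    by (simp add: nn_integral_cmult nn_integral_gauss_dens)
  finally show ?thesis
    using ennreal_less_top[of C] by (simp add: le_less_trans)
qed

lemma ln_gauss_dens_shift_ratio:
  fixes y m F :: "'a::euclidean_space"
  assumes \<sigma>: "0 < \<sigma>" and a: "0 < a"
  shows "ln (gauss_dens (\<sigma>\<^sup>2 * a) (m + (2 * \<sigma>\<^sup>2 * l) *\<^sub>R F) y / gauss_dens (\<sigma>\<^sup>2 * a) m y)
    = 2 * \<sigma>\<^sup>2 * (l\<^sup>2 / a * (norm F)\<^sup>2)
      + 2 * \<sigma> * (l / sqrt a * (F \<bullet> ((1 / (\<sigma> * sqrt a)) *\<^sub>R (y - m - (2 * \<sigma>\<^sup>2 * l) *\<^sub>R F))))"
proof -
  define d where "d = (2 * \<sigma>\<^sup>2 * l) *\<^sub>R F"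
  define r where "r = y - m - d"
  define v where "v = \<sigma>\<^sup>2 * a"
  define s where "s = sqrt a"
  have v: "0 < v" using \<sigma> a by (simp add: v_def)
  have s: "0 < s" "s\<^sup>2 = a" using a by (auto simp: s_def)
  have "gauss_dens v (m + d) y / gauss_dens v m y = exp (- (norm r)\<^sup>2 / (2 * v)) / exp (- (norm (r + d))\<^sup>2 / (2 * v))"
    using v unfolding gauss_dens_def r_def by (simp add: algebra_simps)
  then have "ln (gauss_dens v (m + d) y / gauss_dens v m y) = ((norm (r + d))\<^sup>2 - (norm r)\<^sup>2) / (2 * v)"
    by (simp add: exp_diff[symmetric] diff_divide_distrib)
  also have "(norm (r + d))\<^sup>2 - (norm r)\<^sup>2 = 2 * (r \<bullet> d) + (norm d)\<^sup>2"
    by (simp add: power2_norm_eq_inner inner_add_left inner_add_right inner_commute)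
  also have "r = (\<sigma> * s) *\<^sub>R ((1 / (\<sigma> * s)) *\<^sub>R r)" using \<sigma> s by simp
  finally have eq: "ln (gauss_dens v (m + d) y / gauss_dens v m y)
      = (2 * (\<sigma> * s * (2 * \<sigma>\<^sup>2 * l)) * (((1 / (\<sigma> * s)) *\<^sub>R r) \<bullet> F) + (2 * \<sigma>\<^sup>2 * l)\<^sup>2 * (norm F)\<^sup>2) / (2 * v)"
    by (simp add: d_def power_mult_distrib inner_commute)
  show ?thesis
    unfolding d_def[symmetric] r_def[symmetric] v_def[symmetric] s_def[symmetric] eq
    using \<sigma> s a by (simp add: v_def inner_commute field_simps power2_eq_square)
qed

section \<open>Gaussian Markov chains\<close>

abbreviation lborel_Pi :: "nat set \<Rightarrow> (nat \<Rightarrow> 'a::euclidean_space) measure" where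
  "lborel_Pi I \<equiv> Pi\<^sub>M I (\<lambda>_. lborel)"

lemma product_sigma_finite_lborel: "product_sigma_finite (\<lambda>_::'i. (lborel::'a::euclidean_space measure))"
  unfolding product_sigma_finite_def by (simp add: lborel.sigma_finite_measure_axioms)

lemma indicator_PiE_restrict:
  assumes "finite I"
  shows "(indicator (Pi\<^sub>E I A) (restrict x I) :: 'b::comm_semiring_1) = (\<Prod>i\<in>I. indicator (A i) (x i))"
proof (cases "\<forall>i\<in>I. x i \<in> A i")
  case False
  then obtain i where "i \<in> I" "x i \<notin> A i" by blast
  with assms show ?thesis by (subst prod_zero) (auto simp: indicator_def restrict_PiE_iff intro!: bexI[of _ i])
qed (simp add: restrict_PiE_iff)

lemma AE_PiM_lborel_component:
  fixes P :: "'a::euclidean_space \<Rightarrow> bool"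
  assumes "finite I" "i \<in> I" and P: "AE x in lborel. P x"
  shows "AE y in Pi\<^sub>M I (\<lambda>_. lborel). P (y i)"
proof -
  interpret product_sigma_finite "\<lambda>_. lborel::'a measure"
    by (rule product_sigma_finite_lborel)
  from P obtain N where "{x \<in> space lborel. \<not> P x} \<subseteq> N" "emeasure lborel N = 0" "N \<in> sets lborel"
    by (rule AE_E)
  then have N: "N \<in> null_sets lborel" "{x. \<not> P x} \<subseteq> N"
    by auto
  have "{y \<in> space (Pi\<^sub>M I (\<lambda>_. lborel)). y i \<in> N} = Pi\<^sub>E I (\<lambda>j. if j = i then N else UNIV)"
    using \<open>i \<in> I\<close> by (auto simp: space_PiM PiE_iff extensional_def dest!: bspec[of _ _ i])
  moreover have "emeasure (Pi\<^sub>M I (\<lambda>_. lborel)) (Pi\<^sub>E I (\<lambda>j. if j = i then N else UNIV)) = 0"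
    using assms N by (subst emeasure_PiM) (auto intro!: prod_zero bexI[of _ i])
  ultimately have "{y \<in> space (Pi\<^sub>M I (\<lambda>_. lborel)). y i \<in> N} \<in> null_sets (Pi\<^sub>M I (\<lambda>_. lborel))"
    using assms N by (auto intro!: null_setsI sets_PiM_I_finite dest: null_setsD2)
  then show ?thesis
    by (rule AE_I') (use N in auto)
qed

text \<open>The Markov chain \<open>y\<^sub>0 \<sim> N(0, v\<^sub>0 I)\<close>, \<open>y\<^sub>j\<^sub>+\<^sub>1 = m\<^sub>j(y\<^sub>j) + s\<^sub>j \<epsilon>\<^sub>j\<close> for \<open>j < K\<close>, given by its
  density \<open>chain_dens n\<close> on the first \<open>n + 1\<close> coordinates.\<close>

locale gauss_chain =
  fixes v0 :: real and K :: nat and s :: "nat \<Rightarrow> real" and m :: "nat \<Rightarrow> 'a::euclidean_space \<Rightarrow> 'a"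
  assumes v0_pos: "0 < v0"
    and s_nonzero: "\<And>j. j < K \<Longrightarrow> s j \<noteq> 0"
    and m_measurable: "\<And>j. j < K \<Longrightarrow> m j \<in> borel_measurable borel"
begin

definition chain_dens :: "nat \<Rightarrow> (nat \<Rightarrow> 'a) \<Rightarrow> real" where
  "chain_dens n y = gauss_dens v0 0 (y 0) * (\<Prod>j<n. gauss_dens ((s j)\<^sup>2) (m j (y j)) (y (Suc j)))"

definition noise :: "nat \<Rightarrow> (nat \<Rightarrow> 'a) \<Rightarrow> 'a" where
  "noise j y = (1 / s j) *\<^sub>R (y (Suc j) - m j (y j))"

abbreviation chain_law :: "(nat \<Rightarrow> 'a) measure" where
  "chain_law \<equiv> density (lborel_Pi {0..K}) (chain_dens K)"

lemma chain_dens_nonneg: "0 \<le> chain_dens n y"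
  unfolding chain_dens_def by (intro mult_nonneg_nonneg prod_nonneg gauss_dens_nonneg ballI)

lemma chain_dens_pos: "n \<le> K \<Longrightarrow> 0 < chain_dens n y"
  unfolding chain_dens_def using v0_pos s_nonzero
  by (intro mult_pos_pos prod_pos ballI gauss_dens_pos) auto

lemma measurable_chain_dens [measurable]:
  assumes "n \<le> K" "n \<le> N"
  shows "chain_dens n \<in> borel_measurable (lborel_Pi {0..N})"
  unfolding chain_dens_def using assms
  by (intro borel_measurable_times borel_measurable_prod measurable_gauss_dens measurable_const
      measurable_compose[OF _ m_measurable] measurable_component_singleton) auto

lemma measurable_noise:
  assumes "j < K" "j \<in> I" "Suc j \<in> I"
  shows "noise j \<in> borel_measurable (lborel_Pi I)"
proof -
  note [measurable] = m_measurable[OF \<open>j < K\<close>]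
  show ?thesis unfolding noise_def using assms by measurable
qed

lemma chain_dens_Suc_upd:
  "chain_dens (Suc n) (y(Suc n := z)) = chain_dens n y * gauss_dens ((s n)\<^sup>2) (m n (y n)) z"
proof -
  have "(\<Prod>j<n. gauss_dens ((s j)\<^sup>2) (m j ((y(Suc n := z)) j)) ((y(Suc n := z)) (Suc j)))
      = (\<Prod>j<n. gauss_dens ((s j)\<^sup>2) (m j (y j)) (y (Suc j)))"
    by (intro prod.cong) auto
  then show ?thesis by (simp add: chain_dens_def mult_ac)
qed

text \<open>Conditionally on \<open>y\<^sub>0, \<dots>, y\<^sub>n\<close>, the noise \<open>\<epsilon>\<^sub>n\<close> is standard Gaussian.\<close>

lemma nn_integral_noise_last:
  fixes G :: "'a \<Rightarrow> ennreal"
  assumes n: "n < K" and [measurable]: "G \<in> borel_measurable borel"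
  shows "(\<integral>\<^sup>+ z. G (noise n (y(Suc n := z))) * chain_dens (Suc n) (y(Suc n := z)) \<partial>lborel)
       = chain_dens n y * (\<integral>\<^sup>+ e. G e \<partial>std_gauss)"
proof -
  have "(\<integral>\<^sup>+ z. G (noise n (y(Suc n := z))) * chain_dens (Suc n) (y(Suc n := z)) \<partial>lborel)
      = (\<integral>\<^sup>+ z. chain_dens n y * (G ((1 / s n) *\<^sub>R (z - m n (y n))) * gauss_dens ((s n)\<^sup>2) (m n (y n)) z)
          \<partial>lborel)"
    by (simp add: chain_dens_Suc_upd noise_def ennreal_mult chain_dens_nonneg gauss_dens_nonneg ac_simps)
  also have "\<dots> = chain_dens n y
      * (\<integral>\<^sup>+ z. G ((1 / s n) *\<^sub>R (z - m n (y n))) * gauss_dens ((s n)\<^sup>2) (m n (y n)) z \<partial>lborel)"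
    by (rule nn_integral_cmult) measurable
  also have "\<dots> = chain_dens n y * (\<integral>\<^sup>+ e. G e \<partial>std_gauss)"
    using s_nonzero[OF n] by (simp add: nn_integral_gauss_dens_standardise)
  finally show ?thesis .
qed

lemma nn_integral_chain_dens_Suc:
  fixes F :: "(nat \<Rightarrow> 'a) \<Rightarrow> 'a \<Rightarrow> ennreal"
  assumes n: "n < K"
    and F: "(\<lambda>p. F (fst p) (snd p)) \<in> borel_measurable (lborel_Pi {0..Suc n} \<Otimes>\<^sub>M lborel)"
    and F_upd: "\<And>y z e. F (y(Suc n := z)) e = F y e"
  shows "(\<integral>\<^sup>+ y. F y (noise n y) * chain_dens (Suc n) y \<partial>lborel_Pi {0..Suc n})
       = (\<integral>\<^sup>+ y. (\<integral>\<^sup>+ e. F y e \<partial>std_gauss) * chain_dens n y \<partial>lborel_Pi {0..n})"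
proof -
  interpret product_sigma_finite "\<lambda>_::nat. (lborel::'a measure)"
    by (rule product_sigma_finite_lborel)
  have ins: "{0..Suc n} = insert (Suc n) {0..n}" by auto
  have "(\<lambda>y. (y, noise n y)) \<in> measurable (lborel_Pi {0..Suc n}) (lborel_Pi {0..Suc n} \<Otimes>\<^sub>M lborel)"
    using measurable_noise[of n "{0..Suc n}"] n by (intro measurable_Pair measurable_ident_sets) auto
  from measurable_compose[OF this F]
  have "(\<lambda>y. F y (noise n y)) \<in> borel_measurable (lborel_Pi {0..Suc n})" by simp
  then have Fm: "(\<lambda>y. F y (noise n y) * chain_dens (Suc n) y) \<in> borel_measurable (lborel_Pi {0..Suc n})"
    by measurable (use n in auto)
  have "(\<integral>\<^sup>+ y. F y (noise n y) * chain_dens (Suc n) y \<partial>lborel_Pi {0..Suc n})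
      = (\<integral>\<^sup>+ x. (\<integral>\<^sup>+ z. F (x(Suc n := z)) (noise n (x(Suc n := z))) * chain_dens (Suc n) (x(Suc n := z))
          \<partial>lborel) \<partial>lborel_Pi {0..n})"
    unfolding ins by (rule product_nn_integral_insert) (use Fm[unfolded ins] in auto)
  also have "\<dots> = (\<integral>\<^sup>+ y. (\<integral>\<^sup>+ e. F y e \<partial>std_gauss) * chain_dens n y \<partial>lborel_Pi {0..n})"
  proof (intro nn_integral_cong)
    fix x :: "nat \<Rightarrow> 'a" assume x: "x \<in> space (lborel_Pi {0..n})"
    have "x(Suc n := 0) \<in> space (lborel_Pi {0..Suc n})"
      using x by (auto simp: space_PiM PiE_def extensional_def)
    then have "(\<lambda>e. (\<lambda>p. F (fst p) (snd p)) (x(Suc n := 0), e)) \<in> borel_measurable lborel"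
      by (rule measurable_Pair2[OF F])
    then have "F x \<in> borel_measurable borel"
      by (simp add: F_upd[of x 0])
    from nn_integral_noise_last[OF n this] show "(\<integral>\<^sup>+ z. F (x(Suc n := z)) (noise n (x(Suc n := z))) * chain_dens (Suc n) (x(Suc n := z))
        \<partial>lborel) = (\<integral>\<^sup>+ e. F x e \<partial>std_gauss) * chain_dens n x"
      by (simp add: F_upd mult.commute)
  qed
  finally show ?thesis .
qed

lemma nn_integral_chain_dens_0: "(\<integral>\<^sup>+ y. chain_dens 0 y \<partial>lborel_Pi {0..0}) = 1"
proof -
  have "(\<integral>\<^sup>+ y. chain_dens 0 y \<partial>lborel_Pi {0..0}) = (\<integral>\<^sup>+ y. gauss_dens v0 0 (y 0 :: 'a) \<partial>lborel_Pi {0})"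
    by (simp add: chain_dens_def)
  also have "\<dots> = (\<integral>\<^sup>+ x. gauss_dens v0 0 (x::'a) \<partial>lborel)"
    using product_sigma_finite.product_nn_integral_singleton[OF product_sigma_finite_lborel,
        where f="\<lambda>x. ennreal (gauss_dens v0 0 x)" and i=0]
    by simp
  also have "\<dots> = 1"
    using v0_pos by (simp add: nn_integral_gauss_dens)
  finally show ?thesis .
qed

lemma nn_integral_chain_dens_marginal:
  fixes W :: "(nat \<Rightarrow> 'a) \<Rightarrow> ennreal"
  assumes "k \<le> n" "n \<le> K"
    and W: "\<And>i. k \<le> i \<Longrightarrow> W \<in> borel_measurable (lborel_Pi {0..i})"
    and W_upd: "\<And>y i z. k < i \<Longrightarrow> W (y(i := z)) = W y"
  shows "(\<integral>\<^sup>+ y. W y * chain_dens n y \<partial>lborel_Pi {0..n}) = (\<integral>\<^sup>+ y. W y * chain_dens k y \<partial>lborel_Pi {0..k})"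
  using assms(1,2)
proof (induction n)
  case (Suc n)
  show ?case
  proof (cases "k = Suc n")
    case False
    then have "k \<le> n" "n < K" using Suc.prems by auto
    have "(\<integral>\<^sup>+ y. W y * chain_dens (Suc n) y \<partial>lborel_Pi {0..Suc n})
        = (\<integral>\<^sup>+ y. (\<integral>\<^sup>+ e. W y \<partial>(std_gauss::'a measure)) * chain_dens n y \<partial>lborel_Pi {0..n})"
    proof (rule nn_integral_chain_dens_Suc[OF \<open>n < K\<close>, where F="\<lambda>y e. W y"])
      show "(\<lambda>p. W (fst p)) \<in> borel_measurable (lborel_Pi {0..Suc n} \<Otimes>\<^sub>M lborel)"
        using \<open>k \<le> n\<close> by (intro measurable_compose[OF measurable_fst W]) simp
      show "W (y(Suc n := z)) = W y" for y z
        using \<open>k \<le> n\<close> by (intro W_upd) simp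
    qed
    also have "\<dots> = (\<integral>\<^sup>+ y. W y * chain_dens n y \<partial>lborel_Pi {0..n})"
      using prob_space.emeasure_space_1[OF prob_space_std_gauss[where 'a='a]] by simp
    finally show ?thesis
      using Suc.IH \<open>k \<le> n\<close> \<open>n < K\<close> by simp
  qed simp
qed simp

lemma nn_integral_chain_dens: "n \<le> K \<Longrightarrow> (\<integral>\<^sup>+ y. chain_dens n y \<partial>lborel_Pi {0..n}) = 1"
  using nn_integral_chain_dens_marginal[of 0 n "\<lambda>_. 1"] nn_integral_chain_dens_0 by simp

lemma nn_integral_prod_noise:
  fixes G :: "nat \<Rightarrow> 'a \<Rightarrow> ennreal"
  assumes "n \<le> K" and G: "\<And>j. j < n \<Longrightarrow> G j \<in> borel_measurable borel"
  shows "(\<integral>\<^sup>+ y. (\<Prod>j<n. G j (noise j y)) * chain_dens n y \<partial>lborel_Pi {0..n})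
       = (\<Prod>j<n. \<integral>\<^sup>+ e. G j e \<partial>std_gauss)"
  using assms
proof (induction n)
  case 0
  then show ?case using nn_integral_chain_dens_0 by simp
next
  case (Suc n)
  then have "n < K" by simp
  have P: "(\<lambda>y. \<Prod>j<n. G j (noise j y)) \<in> borel_measurable (lborel_Pi I)" if "{0..n} \<subseteq> I" for I
    using that \<open>n < K\<close> Suc.prems(2)
    by (intro borel_measurable_prod_ennreal measurable_compose[OF _ Suc.prems(2)] measurable_noise) auto
  have "(\<integral>\<^sup>+ y. (\<Prod>j<Suc n. G j (noise j y)) * chain_dens (Suc n) y \<partial>lborel_Pi {0..Suc n})
      = (\<integral>\<^sup>+ y. (\<lambda>y e. (\<Prod>j<n. G j (noise j y)) * G n e) y (noise n y) * chain_dens (Suc n) y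
          \<partial>lborel_Pi {0..Suc n})"
    by (simp add: mult.commute)
  also have "\<dots> = (\<integral>\<^sup>+ y. (\<integral>\<^sup>+ e. (\<Prod>j<n. G j (noise j y)) * G n e \<partial>std_gauss) * chain_dens n y
      \<partial>lborel_Pi {0..n})"
  proof (rule nn_integral_chain_dens_Suc[OF \<open>n < K\<close>])
    show "(\<lambda>p. (\<Prod>j<n. G j (noise j (fst p))) * G n (snd p))
        \<in> borel_measurable (lborel_Pi {0..Suc n} \<Otimes>\<^sub>M lborel)"
      using Suc.prems(2)[of n]
      by (intro borel_measurable_times_ennreal measurable_compose[OF measurable_fst P]
          measurable_compose[OF measurable_snd]) auto
    show "(\<Prod>j<n. G j (noise j (y(Suc n := z)))) * G n e = (\<Prod>j<n. G j (noise j y)) * G n e" for y z e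
      by (intro arg_cong2[where f="(*)"] refl prod.cong) (auto simp: noise_def)
  qed
  also have "\<dots> = (\<integral>\<^sup>+ e. G n e \<partial>std_gauss) * (\<integral>\<^sup>+ y. (\<Prod>j<n. G j (noise j y)) * chain_dens n y
      \<partial>lborel_Pi {0..n})"
    using Suc.prems(2)[of n] \<open>n < K\<close> P[of "{0..n}"]
    by (subst nn_integral_cmult[symmetric]) (auto intro!: nn_integral_cong simp: nn_integral_multc mult_ac)
  finally show ?case
    using Suc \<open>n < K\<close> by (simp add: mult.commute)
qed

lemma distr_noise:
  "distr chain_law (Pi\<^sub>M {..<K} (\<lambda>_. lborel)) (\<lambda>y. \<lambda>j\<in>{..<K}. noise j y) = Pi\<^sub>M {..<K} (\<lambda>_. std_gauss)"
proof (rule product_sigma_finite.PiM_eqI)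
  show "product_sigma_finite (\<lambda>_::nat. std_gauss::'a measure)"
    unfolding product_sigma_finite_def using prob_space_imp_sigma_finite[OF prob_space_std_gauss] by simp
  show "sets (distr chain_law (Pi\<^sub>M {..<K} (\<lambda>_. lborel)) (\<lambda>y. \<lambda>j\<in>{..<K}. noise j y))
      = sets (Pi\<^sub>M {..<K} (\<lambda>_. std_gauss::'a measure))"
    by (simp cong: sets_PiM_cong)
  fix A :: "nat \<Rightarrow> 'a set" assume A: "\<And>j. j \<in> {..<K} \<Longrightarrow> A j \<in> sets std_gauss"
  have noise_vec: "(\<lambda>y. \<lambda>j\<in>{..<K}. noise j y) \<in> measurable (lborel_Pi {0..K}) (Pi\<^sub>M {..<K} (\<lambda>_. lborel))"
    by (intro measurable_restrict) (auto simp: measurable_lborel2 intro!: measurable_noise)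
  have "emeasure (distr chain_law (Pi\<^sub>M {..<K} (\<lambda>_. lborel)) (\<lambda>y. \<lambda>j\<in>{..<K}. noise j y)) (Pi\<^sub>E {..<K} A)
      = (\<integral>\<^sup>+ y. (indicator (Pi\<^sub>E {..<K} A) (\<lambda>j\<in>{..<K}. noise j y) :: ennreal) * chain_dens K y
          \<partial>lborel_Pi {0..K})"
    using A noise_vec
    by (subst emeasure_distr) (auto simp: emeasure_density nn_integral_density
        intro!: sets_PiM_I_finite measurable_sets nn_integral_cong split: split_indicator)
  also have "\<dots> = (\<integral>\<^sup>+ y. (\<Prod>j<K. indicator (A j) (noise j y) :: ennreal) * chain_dens K y \<partial>lborel_Pi {0..K})"
    by (simp add: indicator_PiE_restrict)
  also have "\<dots> = (\<Prod>j<K. emeasure std_gauss (A j))"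
    using A by (subst nn_integral_prod_noise) auto
  finally show "emeasure (distr chain_law (Pi\<^sub>M {..<K} (\<lambda>_. lborel)) (\<lambda>y. \<lambda>j\<in>{..<K}. noise j y))
      (Pi\<^sub>E {..<K} A) = (\<Prod>j\<in>{..<K}. emeasure std_gauss (A j))" .
qed simp

lemma measurable_noise_pair:
  assumes "j < K" "Suc j \<le> n"
    and h: "(\<lambda>p. h (fst p) (snd p)) \<in> borel_measurable (lborel \<Otimes>\<^sub>M lborel)"
  shows "(\<lambda>y. h (y j) (noise j y)) \<in> borel_measurable (lborel_Pi {0..n})"
proof -
  have "(\<lambda>y. (y j, noise j y)) \<in> measurable (lborel_Pi {0..n}) (lborel \<Otimes>\<^sub>M lborel)"
    using assms(1,2) by (intro measurable_Pair measurable_component_singleton)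
      (auto simp: measurable_lborel2 intro!: measurable_noise)
  from measurable_compose[OF this h] show ?thesis by simp
qed

lemma nn_integral_noise:
  fixes h :: "'a \<Rightarrow> 'a \<Rightarrow> ennreal"
  assumes j: "j < K" and h: "(\<lambda>p. h (fst p) (snd p)) \<in> borel_measurable (lborel \<Otimes>\<^sub>M lborel)"
  shows "(\<integral>\<^sup>+ y. h (y j) (noise j y) \<partial>chain_law)
       = (\<integral>\<^sup>+ y. (\<integral>\<^sup>+ e. h (y j) e \<partial>std_gauss) * chain_dens j y \<partial>lborel_Pi {0..j})"
proof -
  have "(\<integral>\<^sup>+ y. h (y j) (noise j y) \<partial>chain_law)
      = (\<integral>\<^sup>+ y. h (y j) (noise j y) * chain_dens K y \<partial>lborel_Pi {0..K})"
    using j measurable_noise_pair[OF j _ h, of K]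
    by (subst nn_integral_density) (auto simp: mult.commute)
  also have "\<dots> = (\<integral>\<^sup>+ y. h (y j) (noise j y) * chain_dens (Suc j) y \<partial>lborel_Pi {0..Suc j})"
    using j by (intro nn_integral_chain_dens_marginal measurable_noise_pair[OF j _ h])
      (auto simp: noise_def)
  also have "\<dots> = (\<integral>\<^sup>+ y. (\<integral>\<^sup>+ e. h (y j) e \<partial>std_gauss) * chain_dens j y \<partial>lborel_Pi {0..j})"
  proof (rule nn_integral_chain_dens_Suc[OF j, where F="\<lambda>y e. h (y j) e"])
    have "(\<lambda>p. (fst p j, snd p)) \<in> measurable (lborel_Pi {0..Suc j} \<Otimes>\<^sub>M lborel) (lborel \<Otimes>\<^sub>M lborel)"
      by (intro measurable_Pair measurable_compose[OF measurable_fst] measurable_snd)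
         (auto intro!: measurable_component_singleton)
    from measurable_compose[OF this h]
    show "(\<lambda>p. h (fst p j) (snd p)) \<in> borel_measurable (lborel_Pi {0..Suc j} \<Otimes>\<^sub>M lborel)" by simp
  qed simp
  finally show ?thesis .
qed

lemma integrable_noise_sq:
  assumes j: "j < K"
  shows "integrable chain_law (\<lambda>y. (norm (noise j y))\<^sup>2)"
proof (rule integrableI_bounded)
  show "(\<lambda>y. (norm (noise j y))\<^sup>2) \<in> borel_measurable chain_law"
    using measurable_noise[OF j, of "{0..K}"] j by simp
  have "(\<integral>\<^sup>+ y. (norm (noise j y))\<^sup>2 \<partial>chain_law)
      = (\<integral>\<^sup>+ y. (\<integral>\<^sup>+ e. (norm (e::'a))\<^sup>2 \<partial>std_gauss) * chain_dens j y \<partial>lborel_Pi {0..j})"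
    by (rule nn_integral_noise[OF j, where h="\<lambda>x e. ennreal ((norm e)\<^sup>2)"]) measurable
  also have "\<dots> = (\<integral>\<^sup>+ e. (norm (e::'a))\<^sup>2 \<partial>std_gauss)"
    using j by (simp add: nn_integral_cmult nn_integral_chain_dens)
  finally show "(\<integral>\<^sup>+ y. norm ((norm (noise j y))\<^sup>2) \<partial>chain_law) < \<infinity>"
    using std_gauss_second_moment_finite by simp
qed

lemma integrable_inner_noise:
  assumes j: "j < K" and [measurable]: "g \<in> borel_measurable borel"
    and g_sq: "integrable chain_law (\<lambda>y. (norm (g (y j)))\<^sup>2)"
  shows "integrable chain_law (\<lambda>y. g (y j) \<bullet> noise j y)"
proof (rule Bochner_Integration.integrable_bound[OF Bochner_Integration.integrable_add[OF g_sq integrable_noise_sq[OF j]]])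
  show "(\<lambda>y. g (y j) \<bullet> noise j y) \<in> borel_measurable chain_law"
    using measurable_noise[OF j, of "{0..K}"] j by simp
  have "\<bar>a \<bullet> b\<bar> \<le> (norm a)\<^sup>2 + (norm b)\<^sup>2" for a b :: 'a
    using Cauchy_Schwarz_ineq2[of a b] sum_squares_bound[of "norm a" "norm b"]
      mult_nonneg_nonneg[OF norm_ge_zero[of a] norm_ge_zero[of b]] by linarith
  then show "AE y in chain_law. norm (g (y j) \<bullet> noise j y) \<le> norm ((norm (g (y j)))\<^sup>2 + (norm (noise j y))\<^sup>2)"
    by simp
qed

text \<open>By the symmetry \<open>\<epsilon> \<mapsto> -\<epsilon>\<close> of the standard Gaussian, the positive and negative parts of
  \<open>g(y\<^sub>j) \<bullet> \<epsilon>\<^sub>j\<close> have the same integral.\<close>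

lemma integral_inner_noise:
  assumes j: "j < K" and [measurable]: "g \<in> borel_measurable borel"
    and g_sq: "integrable chain_law (\<lambda>y. (norm (g (y j)))\<^sup>2)"
  shows "(\<integral>y. g (y j) \<bullet> noise j y \<partial>chain_law) = 0"
proof -
  have scaled: "(\<integral>\<^sup>+ y. c * (g (y j) \<bullet> noise j y) \<partial>chain_law)
      = (\<integral>\<^sup>+ y. (\<integral>\<^sup>+ e. c * (g (y j) \<bullet> e) \<partial>std_gauss) * chain_dens j y \<partial>lborel_Pi {0..j})" for c
    by (rule nn_integral_noise[OF j, where h="\<lambda>x e. ennreal (c * (g x \<bullet> e))"]) measurable
  moreover have "(\<integral>\<^sup>+ e. - (F \<bullet> e) \<partial>std_gauss) = (\<integral>\<^sup>+ e. F \<bullet> (e::'a) \<partial>std_gauss)" for F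
    using nn_integral_std_gauss_uminus[of "\<lambda>e. ennreal (- (F \<bullet> e))"] by simp
  ultimately have "(\<integral>\<^sup>+ y. g (y j) \<bullet> noise j y \<partial>chain_law) = (\<integral>\<^sup>+ y. - (g (y j) \<bullet> noise j y) \<partial>chain_law)"
    using scaled[of 1] scaled[of "-1"] by simp
  then show ?thesis
    by (simp add: real_lebesgue_integral_def[OF integrable_inner_noise[OF assms]])
qed

end

section \<open>The reverse diffusion chain\<close>

lemma KL_dens_chain_rule:
  assumes [measurable]: "q \<in> borel_measurable M" "r \<in> borel_measurable M" "p \<in> borel_measurable M"
    and pos: "AE y in density M q. 0 < q y \<and> 0 < r y \<and> 0 < p y"
    and int_qr: "integrable (density M q) (\<lambda>y. ln (q y / r y))"
    and int_rp: "integrable (density M q) (\<lambda>y. ln (r y / p y))"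
  shows "KL_dens M q p = KL_dens M q r + (\<integral>y. ln (r y / p y) \<partial>density M q)"
proof -
  have "KL_dens M q p = (\<integral>y. ln (q y / r y) + ln (r y / p y) \<partial>density M q)"
    unfolding KL_dens_def
  proof (rule integral_cong_AE)
    show "AE y in density M q. ln (q y / p y) = ln (q y / r y) + ln (r y / p y)"
      using pos by eventually_elim (simp add: ln_div)
  qed measurable
  then show ?thesis
    unfolding KL_dens_def using int_qr int_rp by simp
qed

lemma measurable_pref_dens [measurable]: "pref_dens \<sigma> K \<alpha> \<in> borel_measurable (traj_space K)"
  unfolding pref_dens_def traj_space_def
  by (intro borel_measurable_times borel_measurable_prod measurable_gauss_dens measurable_const
      borel_measurable_scaleR measurable_component_singleton) auto

locale drift_chain =
  fixes \<sigma> :: real and K :: nat and \<alpha> :: "nat \<Rightarrow> real" and f :: "nat \<Rightarrow> 'a::euclidean_space \<Rightarrow> 'a"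
  assumes sigma_pos: "0 < \<sigma>"
    and alpha_range: "\<And>k. k \<in> {1..K} \<Longrightarrow> 0 < \<alpha> k \<and> \<alpha> k < 1"
    and f_measurable: "\<And>k. k \<in> {1..K} \<Longrightarrow> f k \<in> borel_measurable borel"

sublocale drift_chain \<subseteq> gauss_chain "\<sigma>\<^sup>2" K "\<lambda>j. \<sigma> * sqrt (\<alpha> (K - j))"
  "\<lambda>j x. sqrt (1 - \<alpha> (K - j)) *\<^sub>R x + (2 * \<sigma>\<^sup>2 * lam \<alpha> (K - j)) *\<^sub>R f (K - j) x"
proof
  fix j assume "j < K"
  then have "K - j \<in> {1..K}" by auto
  note [measurable] = f_measurable[OF this]
  show "\<sigma> * sqrt (\<alpha> (K - j)) \<noteq> 0"
    using sigma_pos alpha_range[OF \<open>K - j \<in> {1..K}\<close>] by simp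
  show "(\<lambda>x. sqrt (1 - \<alpha> (K - j)) *\<^sub>R x + (2 * \<sigma>\<^sup>2 * lam \<alpha> (K - j)) *\<^sub>R f (K - j) x)
      \<in> borel_measurable borel"
    by measurable
qed (use sigma_pos in simp)

context drift_chain
begin

lemma q_dens_eq_chain_dens: "q_dens \<sigma> K \<alpha> f = chain_dens K"
proof
  fix y :: "nat \<Rightarrow> 'a"
  have "(\<sigma> * sqrt (\<alpha> (K - j)))\<^sup>2 = \<sigma>\<^sup>2 * \<alpha> (K - j)" if "j < K" for j
  proof -
    from that have "K - j \<in> {1..K}" by auto
    from alpha_range[OF this] show ?thesis by (simp add: power_mult_distrib)
  qed
  then show "q_dens \<sigma> K \<alpha> f y = chain_dens K y"
    unfolding q_dens_def chain_dens_def by (intro arg_cong2[where f="(*)"] prod.cong) auto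
qed

lemma q_meas_eq_chain_law: "q_meas \<sigma> K \<alpha> f = chain_law"
  unfolding q_meas_def traj_space_def q_dens_eq_chain_dens ..

lemma eps_noise_eq_noise: "k \<in> {1..K} \<Longrightarrow> eps_noise \<sigma> K \<alpha> f k y = noise (K - k) y"
  unfolding eps_noise_def noise_def by (simp add: algebra_simps Suc_diff_le)

lemma distr_eps_noise:
  "distr (q_meas \<sigma> K \<alpha> f) (Pi\<^sub>M {1..K} (\<lambda>_. lborel)) (\<lambda>y. \<lambda>k\<in>{1..K}. eps_noise \<sigma> K \<alpha> f k y)
    = Pi\<^sub>M {1..K} (\<lambda>_. std_gauss)"
proof -
  let ?noises = "\<lambda>y. \<lambda>j\<in>{..<K}. noise j y" and ?reindex = "\<lambda>\<omega>. \<lambda>k\<in>{1..K}. \<omega> (K - k)"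
  have "?noises \<in> measurable chain_law (Pi\<^sub>M {..<K} (\<lambda>_. lborel))"
    by (intro measurable_restrict) (auto simp: measurable_lborel2 intro!: measurable_noise)
  moreover have "?reindex \<in> measurable (Pi\<^sub>M {..<K} (\<lambda>_. lborel)) (Pi\<^sub>M {1..K} (\<lambda>_. std_gauss::'a measure))"
    by (intro measurable_restrict measurable_component_singleton) (auto simp: measurable_lborel2)
  ultimately have "distr (q_meas \<sigma> K \<alpha> f) (Pi\<^sub>M {1..K} (\<lambda>_. lborel)) (\<lambda>y. \<lambda>k\<in>{1..K}. eps_noise \<sigma> K \<alpha> f k y)
      = distr (distr chain_law (Pi\<^sub>M {..<K} (\<lambda>_. lborel)) ?noises) (Pi\<^sub>M {1..K} (\<lambda>_. std_gauss)) ?reindex"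
    by (subst distr_distr) (auto simp: q_meas_eq_chain_law eps_noise_eq_noise
        intro!: distr_cong sets_PiM_cong)
  also have "\<dots> = Pi\<^sub>M {1..K} (\<lambda>_. std_gauss)"
    unfolding distr_noise
    by (rule distr_PiM_reindex[where M="\<lambda>_. std_gauss", OF prob_space_std_gauss]) (auto simp: inj_on_def)
  finally show ?thesis .
qed

lemma pref_dens_pos: "0 < pref_dens \<sigma> K \<alpha> y"
  unfolding pref_dens_def using sigma_pos alpha_range
  by (auto intro!: mult_pos_pos prod_pos gauss_dens_pos)

text \<open>No positivity of \<open>\<pi>\<close> is needed here: where \<open>\<pi>(y\<^sub>K) = 0\<close> both sides are \<open>ln 0 = 0\<close>, as \<open>x / 0 = 0\<close>.\<close>

lemma ln_pref_dens_div_p_dens: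
  "ln (pref_dens \<sigma> K \<alpha> y / p_dens \<sigma> K \<alpha> \<pi> y) = ln (gauss_dens (\<sigma>\<^sup>2) 0 (y K) / \<pi> (y K))"
  using pref_dens_pos[of y] gauss_dens_pos[of "\<sigma>\<^sup>2" 0 "y K"] sigma_pos by (simp add: p_dens_def)

text \<open>Step \<open>j\<close> of both chains is step \<open>k = K - j\<close> of the forward process, hence the reindexing.\<close>

lemma ln_q_dens_div_pref_dens:
  "ln (q_dens \<sigma> K \<alpha> f y / pref_dens \<sigma> K \<alpha> y) =
        2 * \<sigma>\<^sup>2 * (\<Sum>k=1..K. (lam \<alpha> k)\<^sup>2 / \<alpha> k * (norm (f k (y (K - k))))\<^sup>2)
      + 2 * \<sigma> * (\<Sum>k=1..K. lam \<alpha> k / sqrt (\<alpha> k) * (f k (y (K - k)) \<bullet> eps_noise \<sigma> K \<alpha> f k y))"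
proof -
  define T where "T k = 2 * \<sigma>\<^sup>2 * ((lam \<alpha> k)\<^sup>2 / \<alpha> k * (norm (f k (y (K - k))))\<^sup>2)
      + 2 * \<sigma> * (lam \<alpha> k / sqrt (\<alpha> k) * (f k (y (K - k)) \<bullet> eps_noise \<sigma> K \<alpha> f k y))" for k
  define a where "a j = gauss_dens (\<sigma>\<^sup>2 * \<alpha> (K - j))
        (sqrt (1 - \<alpha> (K - j)) *\<^sub>R y j + (2 * \<sigma>\<^sup>2 * lam \<alpha> (K - j)) *\<^sub>R f (K - j) (y j)) (y (Suc j))" for j
  define b where "b j = gauss_dens (\<sigma>\<^sup>2 * \<alpha> (K - j)) (sqrt (1 - \<alpha> (K - j)) *\<^sub>R y j) (y (Suc j))" for j
  have ab: "0 < a j" "0 < b j" if "j < K" for j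
    using alpha_range[of "K - j"] that sigma_pos by (auto simp: a_def b_def intro!: gauss_dens_pos)
  have "q_dens \<sigma> K \<alpha> f y / pref_dens \<sigma> K \<alpha> y = (\<Prod>j<K. a j) / (\<Prod>j<K. b j)"
    unfolding q_dens_def pref_dens_def a_def b_def using sigma_pos gauss_dens_pos[of "\<sigma>\<^sup>2" 0 "y 0"] by simp
  also have "\<dots> = (\<Prod>j<K. a j / b j)"
    by (rule prod_dividef[symmetric])
  finally have "ln (q_dens \<sigma> K \<alpha> f y / pref_dens \<sigma> K \<alpha> y) = ln (\<Prod>j<K. a j / b j)"
    by simp
  also have "\<dots> = (\<Sum>j<K. ln (a j / b j))"
    using ab by (intro ln_prod) (simp_all add: order.strict_implies_not_eq[symmetric])
  also have "\<dots> = (\<Sum>j<K. T (K - j))"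
  proof (intro sum.cong refl)
    fix j assume j: "j \<in> {..<K}"
    then have "0 < \<alpha> (K - j)" and K_K: "K - (K - j) = j"
      using alpha_range[of "K - j"] by auto
    moreover have "eps_noise \<sigma> K \<alpha> f (K - j) y = (1 / (\<sigma> * sqrt (\<alpha> (K - j)))) *\<^sub>R
        (y (Suc j) - sqrt (1 - \<alpha> (K - j)) *\<^sub>R y j - (2 * \<sigma>\<^sup>2 * lam \<alpha> (K - j)) *\<^sub>R f (K - j) (y j))"
      using j by (simp add: eps_noise_def Suc_diff_le)
    ultimately show "ln (a j / b j) = T (K - j)"
      unfolding a_def b_def T_def K_K by (simp add: ln_gauss_dens_shift_ratio[OF sigma_pos])
  qed
  also have "\<dots> = (\<Sum>k=1..K. T k)"
    by (rule sum.reindex_bij_witness[of _ "\<lambda>k. K - k" "\<lambda>k. K - k"]) auto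
  finally show ?thesis
    unfolding T_def by (simp add: sum.distrib sum_distrib_left)
qed

lemma KL_dens_q_pref:
  assumes f_sq: "\<And>k. k \<in> {1..K} \<Longrightarrow> integrable (q_meas \<sigma> K \<alpha> f) (\<lambda>y. (norm (f k (y (K - k))))\<^sup>2)"
  shows "integrable (q_meas \<sigma> K \<alpha> f) (\<lambda>y. ln (q_dens \<sigma> K \<alpha> f y / pref_dens \<sigma> K \<alpha> y))"
    and "KL_dens (traj_space K) (q_dens \<sigma> K \<alpha> f) (pref_dens \<sigma> K \<alpha>)
      = (\<integral>y. 2 * \<sigma>\<^sup>2 * (\<Sum>k=1..K. (lam \<alpha> k)\<^sup>2 / \<alpha> k * (norm (f k (y (K - k))))\<^sup>2) \<partial>q_meas \<sigma> K \<alpha> f)"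
proof -
  define A where "A y = 2 * \<sigma>\<^sup>2 * (\<Sum>k=1..K. (lam \<alpha> k)\<^sup>2 / \<alpha> k * (norm (f k (y (K - k))))\<^sup>2)" for y
  define C where "C k y = lam \<alpha> k / sqrt (\<alpha> k) * (f k (y (K - k)) \<bullet> eps_noise \<sigma> K \<alpha> f k y)" for k y
  have ln_ratio: "ln (q_dens \<sigma> K \<alpha> f y / pref_dens \<sigma> K \<alpha> y) = A y + 2 * \<sigma> * (\<Sum>k=1..K. C k y)" for y
    unfolding A_def C_def by (rule ln_q_dens_div_pref_dens)
  have f_sq': "integrable chain_law (\<lambda>y. (norm (f k (y (K - k))))\<^sup>2)" if "k \<in> {1..K}" for k
    using f_sq[OF that] by (simp add: q_meas_eq_chain_law)
  have C_eq: "C k = (\<lambda>y. lam \<alpha> k / sqrt (\<alpha> k) * (f k (y (K - k)) \<bullet> noise (K - k) y))"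
    if "k \<in> {1..K}" for k
    using that by (simp add: C_def eps_noise_eq_noise fun_eq_iff)
  have int_C: "integrable chain_law (C k)" and integral_C: "(\<integral>y. C k y \<partial>chain_law) = 0"
    if "k \<in> {1..K}" for k
    using that f_measurable[OF that] f_sq'[OF that]
    by (auto simp: C_eq[OF that] integrable_inner_noise integral_inner_noise)
  have int_A: "integrable chain_law A"
    unfolding A_def using f_sq' by auto
  have int_B: "integrable chain_law (\<lambda>y. 2 * \<sigma> * (\<Sum>k=1..K. C k y))"
    using int_C by auto
  show "integrable (q_meas \<sigma> K \<alpha> f) (\<lambda>y. ln (q_dens \<sigma> K \<alpha> f y / pref_dens \<sigma> K \<alpha> y))"
    unfolding ln_ratio q_meas_eq_chain_law using int_A int_B by auto
  show "KL_dens (traj_space K) (q_dens \<sigma> K \<alpha> f) (pref_dens \<sigma> K \<alpha>) = (\<integral>y. A y \<partial>q_meas \<sigma> K \<alpha> f)"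
    unfolding KL_dens_def ln_ratio q_meas_eq_chain_law[unfolded q_meas_def]
    by (subst Bochner_Integration.integral_add[OF int_A int_B], subst integral_mult_right_zero,
        subst Bochner_Integration.integral_sum[OF int_C]) (simp_all add: integral_C q_meas_eq_chain_law)
qed

lemma AE_p_dens_pos:
  assumes "\<pi> \<in> borel_measurable lborel" and "AE x in lborel. 0 < \<pi> x"
  shows "AE y in q_meas \<sigma> K \<alpha> f. 0 < p_dens \<sigma> K \<alpha> \<pi> y"
proof -
  have [measurable]: "\<pi> \<in> borel_measurable borel"
    using assms(1) by simp
  have "AE y in lborel_Pi {0..K}. 0 < \<pi> (y K)"
    by (rule AE_PiM_lborel_component) (use assms(2) in auto)
  then have "AE y in q_meas \<sigma> K \<alpha> f. 0 < \<pi> (y K)"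
    unfolding q_meas_eq_chain_law by (subst AE_density) (auto elim: AE_mp)
  then show ?thesis
    by eventually_elim
      (use pref_dens_pos gauss_dens_pos[of "\<sigma>\<^sup>2"] sigma_pos in
        \<open>auto simp: p_dens_def intro!: divide_pos_pos mult_pos_pos\<close>)
qed

lemma KL_dens_q_p:
  assumes "\<pi> \<in> borel_measurable lborel" and "AE x in lborel. 0 < \<pi> x"
    and f_sq: "\<And>k. k \<in> {1..K} \<Longrightarrow> integrable (q_meas \<sigma> K \<alpha> f) (\<lambda>y. (norm (f k (y (K - k))))\<^sup>2)"
    and log_ratio: "integrable (q_meas \<sigma> K \<alpha> f) (\<lambda>y. ln (gauss_dens (\<sigma>\<^sup>2) 0 (y K) / \<pi> (y K)))"
  shows "KL_dens (traj_space K) (q_dens \<sigma> K \<alpha> f) (p_dens \<sigma> K \<alpha> \<pi>) =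
      KL_dens (traj_space K) (q_dens \<sigma> K \<alpha> f) (pref_dens \<sigma> K \<alpha>)
      + (\<integral>y. ln (gauss_dens (\<sigma>\<^sup>2) 0 (y K) / \<pi> (y K)) \<partial>q_meas \<sigma> K \<alpha> f)"
proof -
  have [measurable]: "\<pi> \<in> borel_measurable borel" "(\<lambda>y. y K) \<in> borel_measurable (traj_space K)"
    using assms(1) by (simp_all add: traj_space_def)
  have "KL_dens (traj_space K) (q_dens \<sigma> K \<alpha> f) (p_dens \<sigma> K \<alpha> \<pi>) =
      KL_dens (traj_space K) (q_dens \<sigma> K \<alpha> f) (pref_dens \<sigma> K \<alpha>)
      + (\<integral>y. ln (pref_dens \<sigma> K \<alpha> y / p_dens \<sigma> K \<alpha> \<pi> y) \<partial>q_meas \<sigma> K \<alpha> f)"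
    unfolding q_meas_def
  proof (rule KL_dens_chain_rule)
    show "q_dens \<sigma> K \<alpha> f \<in> borel_measurable (traj_space K)"
      by (simp add: q_dens_eq_chain_dens traj_space_def)
    show "p_dens \<sigma> K \<alpha> \<pi> \<in> borel_measurable (traj_space K)"
      unfolding p_dens_def by measurable
    show "AE y in density (traj_space K) (q_dens \<sigma> K \<alpha> f).
        0 < q_dens \<sigma> K \<alpha> f y \<and> 0 < pref_dens \<sigma> K \<alpha> y \<and> 0 < p_dens \<sigma> K \<alpha> \<pi> y"
      using AE_p_dens_pos[OF assms(1,2)] unfolding q_meas_def
      by eventually_elim (simp add: q_dens_eq_chain_dens chain_dens_pos pref_dens_pos)
    show "integrable (density (traj_space K) (q_dens \<sigma> K \<alpha> f))
        (\<lambda>y. ln (q_dens \<sigma> K \<alpha> f y / pref_dens \<sigma> K \<alpha> y))"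
      using KL_dens_q_pref(1)[OF f_sq] unfolding q_meas_def .
    show "integrable (density (traj_space K) (q_dens \<sigma> K \<alpha> f))
        (\<lambda>y. ln (pref_dens \<sigma> K \<alpha> y / p_dens \<sigma> K \<alpha> \<pi> y))"
      using log_ratio unfolding q_meas_def ln_pref_dens_div_p_dens .
  qed simp
  then show ?thesis
    unfolding ln_pref_dens_div_p_dens .
qed

end

theorem proposition3:
  fixes \<pi> :: "'a::euclidean_space \<Rightarrow> real"
    and \<sigma> :: real and K :: nat and \<alpha> :: "nat \<Rightarrow> real"
    and f :: "nat \<Rightarrow> 'a \<Rightarrow> 'a"
  assumes pi_meas: "\<pi> \<in> borel_measurable lborel"
    and pi_nonneg: "\<And>x. 0 \<le> \<pi> x"
    and pi_prob: "(\<integral>\<^sup>+ x. ennreal (\<pi> x) \<partial>lborel) = 1"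
    and pi_pos: "AE x in lborel. 0 < \<pi> x"
    and sigma_pos: "0 < \<sigma>"
    and K_ge: "1 \<le> K"
    and alpha_range: "\<And>k. k \<in> {1..K} \<Longrightarrow> 0 < \<alpha> k \<and> \<alpha> k < 1"
    and f_meas: "\<And>k. k \<in> {1..K} \<Longrightarrow> f k \<in> borel_measurable borel"
    and f_int: "\<And>k. k \<in> {1..K} \<Longrightarrow>
        integrable (q_meas \<sigma> K \<alpha> f) (\<lambda>y. (norm (f k (y (K - k))))\<^sup>2)"
    and logpi_int: "integrable (q_meas \<sigma> K \<alpha> f)
        (\<lambda>y. ln (gauss_dens (\<sigma>\<^sup>2) 0 (y K) / \<pi> (y K)))"
  shows
    "(distr (q_meas \<sigma> K \<alpha> f) (PiM {1..K} (\<lambda>_. lborel))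
        (\<lambda>y. \<lambda>k\<in>{1..K}. eps_noise \<sigma> K \<alpha> f k y)
      = PiM {1..K} (\<lambda>_. std_gauss))
   \<and> (\<forall>y. ln (q_dens \<sigma> K \<alpha> f y / pref_dens \<sigma> K \<alpha> y) =
        2 * \<sigma>\<^sup>2 * (\<Sum>k=1..K. (lam \<alpha> k)\<^sup>2 / \<alpha> k * (norm (f k (y (K - k))))\<^sup>2)
      + 2 * \<sigma> * (\<Sum>k=1..K. lam \<alpha> k / sqrt (\<alpha> k) * (f k (y (K - k)) \<bullet> eps_noise \<sigma> K \<alpha> f k y)))
   \<and> KL_dens (traj_space K) (q_dens \<sigma> K \<alpha> f) (p_dens \<sigma> K \<alpha> \<pi>) =
        KL_dens (traj_space K) (q_dens \<sigma> K \<alpha> f) (pref_dens \<sigma> K \<alpha>)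
      + (\<integral>y. ln (gauss_dens (\<sigma>\<^sup>2) 0 (y K) / \<pi> (y K)) \<partial>(q_meas \<sigma> K \<alpha> f))
   \<and> KL_dens (traj_space K) (q_dens \<sigma> K \<alpha> f) (p_dens \<sigma> K \<alpha> \<pi>) =
        (\<integral>y. 2 * \<sigma>\<^sup>2 * (\<Sum>k=1..K. (lam \<alpha> k)\<^sup>2 / \<alpha> k * (norm (f k (y (K - k))))\<^sup>2)
              + ln (gauss_dens (\<sigma>\<^sup>2) 0 (y K) / \<pi> (y K)) \<partial>(q_meas \<sigma> K \<alpha> f))"
proof -
  interpret drift_chain \<sigma> K \<alpha> f
    using sigma_pos alpha_range f_meas by unfold_locales
  have "integrable (q_meas \<sigma> K \<alpha> f)
      (\<lambda>y. 2 * \<sigma>\<^sup>2 * (\<Sum>k=1..K. (lam \<alpha> k)\<^sup>2 / \<alpha> k * (norm (f k (y (K - k))))\<^sup>2))"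
    using f_int by auto
  from Bochner_Integration.integral_add[OF this logpi_int] show ?thesis
    using distr_eps_noise ln_q_dens_div_pref_dens KL_dens_q_pref(2)[OF f_int]
      KL_dens_q_p[OF pi_meas pi_pos f_int logpi_int]
    by simp
qed

end
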